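(* Let $M$ be a Hausdorff space. Then $\mathcal{Q}_x(\mathcal{T}(M))\neq\emptyset$ for every $x\in M$, and $\bigcup_{x\in M}\mathcal{Q}_x(\mathcal{T}(M))$ is dense in $\mathcal{Q}(\mathcal{T}(M))$.
   Context: $\mathcal{T}(M)$ is the lattice of open subsets of $M$. A quasipoint of $\mathcal{T}(M)$ is a maximal dual ideal, i.e. a maximal nonempty family $\mathfrak{B}$ of open sets with $\emptyset\notin\mathfrak{B}$, upward closed and closed under finite intersections. $\mathcal{Q}(\mathcal{T}(M))$ is the set of quasipoints with the topology having base $\mathcal{Q}_U(\mathcal{T}(M))=\{\mathfrak{B}\mid U\in\mathfrak{B}\}$, $U\in\mathcal{T}(M)$. A quasipoint $\mathfrak{B}$ is a quasipoint over $x\in M$ if $x\in\bigcap_{U\in\mathfrak{B}}\overline{U}$; $\mathcal{Q}_x(\mathcal{T}(M))$ denotes the set of quasipoints over $x$. *)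

theory Defs
  imports "HOL-Analysis.Analysis"
begin

definition opens :: "'a topology \<Rightarrow> 'a set set" where
  "opens X = {U. openin X U}"

definition proper_dual_ideal :: "'a topology \<Rightarrow> 'a set set \<Rightarrow> bool" where
  "proper_dual_ideal X B \<longleftrightarrow>
     B \<subseteq> opens X \<and> B \<noteq> {} \<and> {} \<notin> B \<and>
     (\<forall>U V. U \<in> B \<and> V \<in> opens X \<and> U \<subseteq> V \<longrightarrow> V \<in> B) \<and>
     (\<forall>U V. U \<in> B \<and> V \<in> B \<longrightarrow> U \<inter> V \<in> B)"

definition quasipoint :: "'a topology \<Rightarrow> 'a set set \<Rightarrow> bool" where
  "quasipoint X B \<longleftrightarrow> proper_dual_ideal X B \<and>
     (\<forall>C. proper_dual_ideal X C \<and> B \<subseteq> C \<longrightarrow> C = B)"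

definition quasipoints :: "'a topology \<Rightarrow> 'a set set set" where
  "quasipoints X = {B. quasipoint X B}"

definition Q_basic :: "'a topology \<Rightarrow> 'a set \<Rightarrow> 'a set set set" where
  "Q_basic X U = {B \<in> quasipoints X. U \<in> B}"

definition Q_topology :: "'a topology \<Rightarrow> 'a set set topology" where
  "Q_topology X = topology_generated_by {Q_basic X U | U. openin X U}"

definition quasipoints_over :: "'a topology \<Rightarrow> 'a \<Rightarrow> 'a set set set" where
  "quasipoints_over X x = {B \<in> quasipoints X. \<forall>U\<in>B. x \<in> X closure_of U}"

end

theory Submission
  imports Defs
begin

text \<open>The open neighbourhoods of a point x form a proper dual ideal; by Zorn's lemma it extends
  to a quasipoint, which lies over x because each of its members meets every neighbourhood
  of x. Taking x in a nonempty open set U, the quasipoint also contains U, so every nonempty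
  basic open set Q_U contains a quasipoint over some point, which is the density.\<close>

definition open_nhds :: "'a topology \<Rightarrow> 'a \<Rightarrow> 'a set set" where
  "open_nhds X x = {V. openin X V \<and> x \<in> V}"

lemma proper_dual_ideal_openin: "proper_dual_ideal X B \<Longrightarrow> U \<in> B \<Longrightarrow> openin X U"
  unfolding proper_dual_ideal_def opens_def by blast

lemma proper_dual_ideal_upclosed:
  "proper_dual_ideal X B \<Longrightarrow> U \<in> B \<Longrightarrow> openin X V \<Longrightarrow> U \<subseteq> V \<Longrightarrow> V \<in> B"
  unfolding proper_dual_ideal_def opens_def by blast

lemma proper_dual_ideal_Int: "proper_dual_ideal X B \<Longrightarrow> U \<in> B \<Longrightarrow> V \<in> B \<Longrightarrow> U \<inter> V \<in> B"
  unfolding proper_dual_ideal_def by blast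

lemma proper_dual_ideal_Int_nonempty:
  "proper_dual_ideal X B \<Longrightarrow> U \<in> B \<Longrightarrow> V \<in> B \<Longrightarrow> U \<inter> V \<noteq> {}"
  unfolding proper_dual_ideal_def by metis

lemma proper_dual_ideal_topspace:
  assumes "proper_dual_ideal X B"
  shows "topspace X \<in> B"
proof -
  obtain U where "U \<in> B"
    using assms unfolding proper_dual_ideal_def by blast
  then show ?thesis
    using assms proper_dual_ideal_openin proper_dual_ideal_upclosed openin_subset openin_topspace
    by metis
qed

lemma quasipoint_imp_proper_dual_ideal: "quasipoint X B \<Longrightarrow> proper_dual_ideal X B"
  unfolding quasipoint_def by blast

lemma mem_Q_basic: "B \<in> Q_basic X U \<longleftrightarrow> quasipoint X B \<and> U \<in> B"
  unfolding Q_basic_def quasipoints_def by blast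

lemma proper_dual_ideal_Union_chain:
  assumes "C \<noteq> {}" and chain: "subset.chain {D. proper_dual_ideal X D \<and> F \<subseteq> D} C"
  shows "proper_dual_ideal X (\<Union>C) \<and> F \<subseteq> \<Union>C"
proof -
  have pdi: "\<And>D. D \<in> C \<Longrightarrow> proper_dual_ideal X D" and sup: "\<And>D. D \<in> C \<Longrightarrow> F \<subseteq> D"
    using chain unfolding subset.chain_def by blast+
  have Int_closed: "U \<inter> V \<in> \<Union>C" if UV: "U \<in> \<Union>C" "V \<in> \<Union>C" for U V
  proof -
    obtain D E where "D \<in> C" "E \<in> C" "U \<in> D" "V \<in> E"
      using UV by blast
    moreover have "D \<subseteq> E \<or> E \<subseteq> D"
      using chain \<open>D \<in> C\<close> \<open>E \<in> C\<close> unfolding subset.chain_def by blast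
    ultimately obtain G where "G \<in> C" "U \<in> G" "V \<in> G"
      by blast
    then show ?thesis
      using proper_dual_ideal_Int[OF pdi] by blast
  qed
  obtain D0 where "D0 \<in> C"
    using assms(1) by blast
  have "proper_dual_ideal X (\<Union>C)"
    unfolding proper_dual_ideal_def
  proof (intro conjI allI impI)
    show "\<Union>C \<subseteq> opens X"
      using proper_dual_ideal_openin[OF pdi] unfolding opens_def by blast
    show "\<Union>C \<noteq> {}"
      using pdi[OF \<open>D0 \<in> C\<close>] \<open>D0 \<in> C\<close> unfolding proper_dual_ideal_def by blast
    show "{} \<notin> \<Union>C"
      using proper_dual_ideal_Int_nonempty[OF pdi] by blast
    show "V \<in> \<Union>C" if "U \<in> \<Union>C \<and> V \<in> opens X \<and> U \<subseteq> V" for U V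
      using that proper_dual_ideal_upclosed[OF pdi] unfolding opens_def by blast
  qed (use Int_closed in blast)
  then show ?thesis
    using sup \<open>D0 \<in> C\<close> by blast
qed

lemma proper_dual_ideal_extends_to_quasipoint:
  assumes "proper_dual_ideal X F"
  obtains B where "quasipoint X B" "F \<subseteq> B"
proof -
  let ?A = "{D. proper_dual_ideal X D \<and> F \<subseteq> D}"
  have "\<exists>B\<in>?A. \<forall>D\<in>?A. B \<subseteq> D \<longrightarrow> D = B"
  proof (rule subset_Zorn_nonempty)
    show "?A \<noteq> {}"
      using assms by blast
    show "\<Union>C \<in> ?A" if "C \<noteq> {}" "subset.chain ?A C" for C
      using proper_dual_ideal_Union_chain[OF that] by simp
  qed
  then obtain B where B: "proper_dual_ideal X B" "F \<subseteq> B"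
    and maximal: "\<forall>D\<in>?A. B \<subseteq> D \<longrightarrow> D = B"
    by auto
  have "D = B" if "proper_dual_ideal X D" "B \<subseteq> D" for D
    using maximal that B(2) by auto
  then have "quasipoint X B"
    unfolding quasipoint_def using B(1) by auto
  then show thesis
    using B(2) by (rule that)
qed

lemma proper_dual_ideal_open_nhds:
  assumes "x \<in> topspace X"
  shows "proper_dual_ideal X (open_nhds X x)"
  unfolding proper_dual_ideal_def opens_def open_nhds_def
  using assms by (auto intro: openin_topspace)

lemma proper_dual_ideal_open_nhds_imp_in_closure_of:
  assumes "proper_dual_ideal X B" "open_nhds X x \<subseteq> B" "x \<in> topspace X" "U \<in> B"
  shows "x \<in> X closure_of U"
  unfolding in_closure_of
proof (intro conjI allI impI)
  fix T assume "x \<in> T \<and> openin X T"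
  then have "T \<in> B"
    using assms(2) unfolding open_nhds_def by blast
  then have "U \<inter> T \<noteq> {}"
    using proper_dual_ideal_Int_nonempty[OF assms(1) assms(4)] by blast
  then show "\<exists>y. y \<in> U \<and> y \<in> T"
    by blast
qed (rule assms(3))

lemma quasipoints_over_exists:
  assumes "openin X U" "x \<in> U"
  obtains B where "B \<in> quasipoints_over X x" "U \<in> B"
proof -
  have x: "x \<in> topspace X"
    using assms openin_subset by blast
  obtain B where B: "quasipoint X B" and nhds: "open_nhds X x \<subseteq> B"
    using proper_dual_ideal_extends_to_quasipoint[OF proper_dual_ideal_open_nhds[OF x]] .
  have "\<forall>V\<in>B. x \<in> X closure_of V"
    using proper_dual_ideal_open_nhds_imp_in_closure_of[OF quasipoint_imp_proper_dual_ideal[OF B] nhds x]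
    by blast
  then have "B \<in> quasipoints_over X x"
    using B unfolding quasipoints_over_def quasipoints_def by blast
  moreover have "U \<in> B"
    using nhds assms unfolding open_nhds_def by blast
  ultimately show thesis
    by (rule that)
qed

lemma quasipoints_over_nonempty:
  assumes "x \<in> topspace X"
  shows "quasipoints_over X x \<noteq> {}"
proof -
  obtain B where "B \<in> quasipoints_over X x" "topspace X \<in> B"
    using quasipoints_over_exists[OF openin_topspace assms] .
  then show ?thesis
    by blast
qed

lemma quasipoints_over_subset: "quasipoints_over X x \<subseteq> quasipoints X"
  unfolding quasipoints_over_def by blast

lemma Q_basic_meets_quasipoints_over:
  assumes "openin X U" "U \<noteq> {}"
  shows "(\<Union>x\<in>topspace X. quasipoints_over X x) \<inter> Q_basic X U \<noteq> {}"
proof -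
  obtain x where x: "x \<in> U"
    using assms(2) by blast
  obtain B where B: "B \<in> quasipoints_over X x" "U \<in> B"
    using quasipoints_over_exists[OF assms(1) x] .
  then have "B \<in> Q_basic X U"
    unfolding mem_Q_basic quasipoints_over_def quasipoints_def by blast
  moreover have "x \<in> topspace X"
    using openin_subset[OF assms(1)] x by blast
  ultimately show ?thesis
    using B(1) by blast
qed

lemma topspace_Q_topology: "topspace (Q_topology X) = quasipoints X"
proof -
  have "\<Union>{Q_basic X U | U. openin X U} = quasipoints X"
  proof (intro equalityI subsetI)
    fix B assume "B \<in> \<Union>{Q_basic X U | U. openin X U}"
    then show "B \<in> quasipoints X"
      unfolding Q_basic_def by blast
  next
    fix B assume "B \<in> quasipoints X"
    then have "quasipoint X B"
      unfolding quasipoints_def by simp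
    then have "B \<in> Q_basic X (topspace X)"
      unfolding mem_Q_basic
      using proper_dual_ideal_topspace[OF quasipoint_imp_proper_dual_ideal] by simp
    then show "B \<in> \<Union>{Q_basic X U | U. openin X U}"
      by blast
  qed
  then show ?thesis
    unfolding Q_topology_def by simp
qed

lemma Q_basic_Int:
  assumes "openin X U" "openin X V"
  shows "Q_basic X (U \<inter> V) = Q_basic X U \<inter> Q_basic X V"
proof (intro equalityI subsetI)
  fix B assume "B \<in> Q_basic X (U \<inter> V)"
  then have B: "quasipoint X B" "U \<inter> V \<in> B"
    unfolding mem_Q_basic by simp_all
  note upclosed = proper_dual_ideal_upclosed[OF quasipoint_imp_proper_dual_ideal[OF B(1)] B(2)]
  have "U \<in> B" "V \<in> B"
    using upclosed[OF assms(1)] upclosed[OF assms(2)] by simp_all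
  with B(1) show "B \<in> Q_basic X U \<inter> Q_basic X V"
    by (simp add: mem_Q_basic)
next
  fix B assume "B \<in> Q_basic X U \<inter> Q_basic X V"
  then have B: "quasipoint X B" "U \<in> B" "V \<in> B"
    by (simp_all add: mem_Q_basic)
  then have "U \<inter> V \<in> B"
    using proper_dual_ideal_Int[OF quasipoint_imp_proper_dual_ideal] by blast
  with B(1) show "B \<in> Q_basic X (U \<inter> V)"
    unfolding mem_Q_basic by simp
qed

lemma openin_Q_topology_imp_basic:
  assumes "openin (Q_topology X) W" "B \<in> W"
  obtains U where "openin X U" "B \<in> Q_basic X U" "Q_basic X U \<subseteq> W"
proof -
  have "generate_topology_on {Q_basic X U | U. openin X U} W"
    using assms(1) unfolding Q_topology_def openin_topology_generated_by_iff .
  then have "\<exists>U. openin X U \<and> B \<in> Q_basic X U \<and> Q_basic X U \<subseteq> W"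
    using assms(2)
  proof (induction arbitrary: B rule: generate_topology_on.induct)
    case Empty
    then show ?case by simp
  next
    case (Int W1 W2)
    then obtain U1 U2 where U1: "openin X U1" "B \<in> Q_basic X U1" "Q_basic X U1 \<subseteq> W1"
      and U2: "openin X U2" "B \<in> Q_basic X U2" "Q_basic X U2 \<subseteq> W2"
      by (meson IntE)
    have "openin X (U1 \<inter> U2)"
      using U1(1) U2(1) by (rule openin_Int)
    moreover have "Q_basic X (U1 \<inter> U2) = Q_basic X U1 \<inter> Q_basic X U2"
      using U1(1) U2(1) by (rule Q_basic_Int)
    ultimately show ?case
      using U1 U2 by auto
  next
    case (UN K)
    then obtain W' where "W' \<in> K" "B \<in> W'"
      by blast
    with UN.IH obtain U where "openin X U" "B \<in> Q_basic X U" "Q_basic X U \<subseteq> W'"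
      by meson
    with \<open>W' \<in> K\<close> show ?case
      by blast
  next
    case (Basis W)
    then show ?case
      by auto
  qed
  then show thesis
    using that by blast
qed

lemma Q_topology_closure_of_eq_quasipoints:
  assumes "S \<subseteq> quasipoints X"
    and meets: "\<And>U. openin X U \<Longrightarrow> U \<noteq> {} \<Longrightarrow> S \<inter> Q_basic X U \<noteq> {}"
  shows "(Q_topology X) closure_of S = quasipoints X"
proof (rule equalityI)
  show "(Q_topology X) closure_of S \<subseteq> quasipoints X"
    using closure_of_subset_topspace[of "Q_topology X" S] unfolding topspace_Q_topology .
  show "quasipoints X \<subseteq> (Q_topology X) closure_of S"
  proof
    fix B assume B: "B \<in> quasipoints X"
    show "B \<in> (Q_topology X) closure_of S"
      unfolding in_closure_of topspace_Q_topology
    proof (intro conjI allI impI)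
      fix W assume "B \<in> W \<and> openin (Q_topology X) W"
      then obtain U where U: "openin X U" "B \<in> Q_basic X U" "Q_basic X U \<subseteq> W"
        using openin_Q_topology_imp_basic by metis
      then have "U \<noteq> {}"
        using proper_dual_ideal_Int_nonempty[OF quasipoint_imp_proper_dual_ideal]
        unfolding mem_Q_basic by fastforce
      then show "\<exists>C. C \<in> S \<and> C \<in> W"
        using meets[OF U(1)] U(3) by blast
    qed (rule B)
  qed
qed

theorem proposition2p41:
  fixes M :: "'a topology"
  assumes "Hausdorff_space M"
  shows "(\<forall>x\<in>topspace M. quasipoints_over M x \<noteq> {})
    \<and> (Q_topology M) closure_of (\<Union>x\<in>topspace M. quasipoints_over M x) = quasipoints M"
proof
  show "\<forall>x\<in>topspace M. quasipoints_over M x \<noteq> {}"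
    by (simp add: quasipoints_over_nonempty)
  have "(\<Union>x\<in>topspace M. quasipoints_over M x) \<subseteq> quasipoints M"
    using quasipoints_over_subset by (rule UN_least)
  then show "(Q_topology M) closure_of (\<Union>x\<in>topspace M. quasipoints_over M x) = quasipoints M"
    using Q_basic_meets_quasipoints_over by (rule Q_topology_closure_of_eq_quasipoints)
qed

end
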